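(* If $\xi\in\mathfrak I(\mathrm{SU}(n))\subseteq\mathfrak I(\mathrm U(n))$, then $U_\xi(\mathrm{SU}(n))=U_\xi(\mathrm U(n))$.
   Context: For a compact matrix group $G\subseteq\mathrm U(n)$ with maximal torus Lie algebra $\mathfrak t$ (for $\mathrm U(n)$: diagonal skew-Hermitian matrices; for $\mathrm{SU}(n)$: traceless ones), $\mathfrak I(G)=(2\pi)^{-1}\exp^{-1}(e)\cap\mathfrak t$ and $\gamma_\xi(\lambda)=\exp(-\sqrt{-1}\ln(\lambda)\xi)$. $\Omega_{\mathrm{alg}}G$: loops $\gamma:S^1\to G$, $\gamma(1)=e$, with $\gamma,\gamma^{-1}$ having finite Fourier series; $\Lambda^+_{\mathrm{alg}}G^{\mathbb C}$: loops in $G^{\mathbb C}$ ($\mathrm{GL}(n,\mathbb C)$ resp. $\mathrm{SL}(n,\mathbb C)$) that are polynomials in $\lambda$ with polynomial inverse. $H^n_+$ is the closed span of $\lambda^ie_j$, $i\ge0$, in $L^2(S^1,\mathbb C^n)$. $U_\xi(G)=\{\gamma\in\Omega_{\mathrm{alg}}G:\gamma H^n_+=\Psi\gamma_\xi H^n_+\text{ for some }\Psi\in\Lambda^+_{\mathrm{alg}}G^{\mathbb C}\}$, regarded as a set of subspaces $\gamma H^n_+$ (equivalently loops). *)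

theory Defs
  imports "HOL-Analysis.Analysis"
begin

type_synonym 'n cmat = "complex^'n^'n"
type_synonym 'n cvec = "complex^'n"

text \<open>Laurent loops with finite Fourier series, represented by their (finitely
supported) Fourier coefficients.  The loop value at \<lambda> is
sum_k \<lambda>^k A_k.\<close>

definition fin_supp :: "(int \<Rightarrow> 'n::finite cmat) \<Rightarrow> bool" where
  "fin_supp A \<longleftrightarrow> finite {k. A k \<noteq> 0}"

definition leval :: "(int \<Rightarrow> 'n::finite cmat) \<Rightarrow> complex \<Rightarrow> 'n cmat" where
  "leval A z = (\<chi> i j. \<Sum>k\<in>{k. A k \<noteq> 0}. z powi k * (A k $ i $ j))"

definition cnj_transpose :: "'n::finite cmat \<Rightarrow> 'n cmat" where
  "cnj_transpose A = (\<chi> i j. cnj (A $ j $ i))"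

definition unitary_mat :: "'n::finite cmat \<Rightarrow> bool" where
  "unitary_mat A \<longleftrightarrow> A ** cnj_transpose A = mat 1 \<and> cnj_transpose A ** A = mat 1"

definition U_grp :: "'n::finite cmat \<Rightarrow> bool" where
  "U_grp A \<longleftrightarrow> unitary_mat A"

definition SU_grp :: "'n::finite cmat \<Rightarrow> bool" where
  "SU_grp A \<longleftrightarrow> unitary_mat A \<and> det A = 1"

definition GL_grp :: "'n::finite cmat \<Rightarrow> bool" where
  "GL_grp A \<longleftrightarrow> det A \<noteq> 0"

definition SL_grp :: "'n::finite cmat \<Rightarrow> bool" where
  "SL_grp A \<longleftrightarrow> det A = 1"

definition Omega_alg :: "('n::finite cmat \<Rightarrow> bool) \<Rightarrow> (int \<Rightarrow> 'n cmat) set" where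
  "Omega_alg G = {\<gamma>. fin_supp \<gamma> \<and>
      (\<forall>z. norm z = 1 \<longrightarrow> G (leval \<gamma> z)) \<and>
      leval \<gamma> 1 = mat 1 \<and>
      (\<exists>\<delta>. fin_supp \<delta> \<and> (\<forall>z. norm z = 1 \<longrightarrow>
            leval \<gamma> z ** leval \<delta> z = mat 1 \<and> leval \<delta> z ** leval \<gamma> z = mat 1))}"

definition Lplus_alg :: "('n::finite cmat \<Rightarrow> bool) \<Rightarrow> (int \<Rightarrow> 'n cmat) set" where
  "Lplus_alg Gc = {\<Psi>. fin_supp \<Psi> \<and> (\<forall>k<0. \<Psi> k = 0) \<and>
      (\<forall>z. norm z = 1 \<longrightarrow> Gc (leval \<Psi> z)) \<and>
      (\<exists>\<delta>. fin_supp \<delta> \<and> (\<forall>k<0. \<delta> k = 0) \<and> (\<forall>z. norm z = 1 \<longrightarrow>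
            leval \<Psi> z ** leval \<delta> z = mat 1 \<and> leval \<delta> z ** leval \<Psi> z = mat 1))}"

definition L2circ :: "(complex \<Rightarrow> 'n::finite cvec) set" where
  "L2circ = {f. (\<lambda>\<theta>. f (cis \<theta>)) \<in> borel_measurable lborel \<and>
      set_integrable lborel {0..2*pi} (\<lambda>\<theta>. (norm (f (cis \<theta>)))\<^sup>2)}"

definition l2dist :: "(complex \<Rightarrow> 'n::finite cvec) \<Rightarrow> (complex \<Rightarrow> 'n cvec) \<Rightarrow> real" where
  "l2dist f g = sqrt (LINT \<theta>:{0..2*pi}|lborel. (norm (f (cis \<theta>) - g (cis \<theta>)))\<^sup>2)"

text \<open>H^n_+: closure in L^2 of the complex span of lambda^i e_j, i >= 0.\<close>

definition Hplus :: "(complex \<Rightarrow> 'n::finite cvec) set" where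
  "Hplus = {f \<in> L2circ. \<forall>\<epsilon>>0. \<exists>(N::nat) c.
      l2dist f (\<lambda>z. \<Sum>i<N. (z ^ i) *s c i) < \<epsilon>}"

text \<open>Image M S of a subspace S of L^2 under the multiplication operator by a
matrix-valued function M (as a subset of L^2, closed under a.e. equality).\<close>

definition msub :: "(complex \<Rightarrow> 'n::finite cmat) \<Rightarrow> (complex \<Rightarrow> 'n cvec) set
     \<Rightarrow> (complex \<Rightarrow> 'n cvec) set" where
  "msub M S = {g \<in> L2circ. \<exists>f\<in>S. AE \<theta> in lborel. \<theta> \<in> {0..2*pi} \<longrightarrow>
      g (cis \<theta>) = M (cis \<theta>) *v f (cis \<theta>)}"

text \<open>The integral lattices I(U(n)) and I(SU(n)): diagonal skew-Hermitian
(resp. also traceless) xi with exp(2 pi xi) = e.  For diagonal xi the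
matrix exponential is the diagonal matrix of entrywise exponentials.\<close>

definition diag_mat :: "'n::finite cmat \<Rightarrow> bool" where
  "diag_mat \<xi> \<longleftrightarrow> (\<forall>i j. i \<noteq> j \<longrightarrow> \<xi> $ i $ j = 0)"

definition diag_exp :: "'n::finite cmat \<Rightarrow> 'n cmat" where
  "diag_exp \<xi> = (\<chi> i j. if i = j then exp (\<xi> $ i $ i) else 0)"

definition cscale :: "complex \<Rightarrow> 'n::finite cmat \<Rightarrow> 'n cmat" where
  "cscale c A = (\<chi> i j. c * A $ i $ j)"

definition t_U :: "'n::finite cmat set" where
  "t_U = {\<xi>. diag_mat \<xi> \<and> (\<forall>i. Re (\<xi> $ i $ i) = 0)}"

definition t_SU :: "'n::finite cmat set" where
  "t_SU = {\<xi>. \<xi> \<in> t_U \<and> (\<Sum>i\<in>UNIV. \<xi> $ i $ i) = 0}"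

definition I_U :: "'n::finite cmat set" where
  "I_U = {\<xi> \<in> t_U. diag_exp (cscale (2 * pi) \<xi>) = mat 1}"

definition I_SU :: "'n::finite cmat set" where
  "I_SU = {\<xi> \<in> t_SU. diag_exp (cscale (2 * pi) \<xi>) = mat 1}"

definition gamma_xi :: "'n::finite cmat \<Rightarrow> complex \<Rightarrow> 'n cmat" where
  "gamma_xi \<xi> z = diag_exp (cscale (- \<i> * Ln z) \<xi>)"

definition U_xi :: "('n::finite cmat \<Rightarrow> bool) \<Rightarrow> ('n cmat \<Rightarrow> bool) \<Rightarrow> 'n cmat
     \<Rightarrow> (int \<Rightarrow> 'n cmat) set" where
  "U_xi G Gc \<xi> = {\<gamma> \<in> Omega_alg G. \<exists>\<Psi>\<in>Lplus_alg Gc.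
      msub (leval \<gamma>) Hplus = msub (\<lambda>z. leval \<Psi> z ** gamma_xi \<xi> z) Hplus}"

definition U_xi_sub :: "('n::finite cmat \<Rightarrow> bool) \<Rightarrow> ('n cmat \<Rightarrow> bool) \<Rightarrow> 'n cmat
     \<Rightarrow> (complex \<Rightarrow> 'n cvec) set set" where
  "U_xi_sub G Gc \<xi> = (\<lambda>\<gamma>. msub (leval \<gamma>) Hplus) ` U_xi G Gc \<xi>"

end

theory Submission
  imports Defs "HOL-Computational_Algebra.Polynomial"
begin

text \<open>Only \<open>U\<^sub>\<xi>(U(n)) \<subseteq> U\<^sub>\<xi>(SU(n))\<close> needs an argument. Let \<open>\<gamma>H\<^sub>+ = \<Psi>\<gamma>\<^sub>\<xi>H\<^sub>+\<close>. Since
\<open>H\<^sub>+\<close> has no negative Fourier modes, both \<open>\<gamma>\<^sup>-\<^sup>1\<Psi>\<gamma>\<^sub>\<xi>\<close> and \<open>\<gamma>\<^sub>\<xi>\<^sup>-\<^sup>1\<Psi>\<^sup>-\<^sup>1\<gamma>\<close> are polynomial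
in \<open>\<lambda>\<close>. As \<open>tr \<xi> = 0\<close> gives \<open>det \<gamma>\<^sub>\<xi> = 1\<close>, the determinants of \<open>\<gamma>\<close> and \<open>\<gamma>\<^sup>-\<^sup>1\<close> are then
mutually inverse polynomials, hence constant, and \<open>\<gamma>(1) = e\<close> makes them \<open>1\<close>. Likewise
\<open>det \<Psi>\<close> is a nonzero constant \<open>c\<close>, and rescaling \<open>\<Psi>\<close> by an \<open>n\<close>-th root of \<open>1/c\<close> moves it
into \<open>SL(n,\<complex>)\<close> without changing the subspace \<open>\<Psi>\<gamma>\<^sub>\<xi>H\<^sub>+\<close>.\<close>

section \<open>Laurent polynomials on the unit circle\<close>

text \<open>A Laurent polynomial is given by a list of (coefficient, exponent) pairs; repeated
exponents are allowed, so products need no normalisation.\<close>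

definition laurent :: "(complex \<times> int) list \<Rightarrow> complex \<Rightarrow> complex" where
  "laurent xs z = (\<Sum>p\<leftarrow>xs. fst p * z powi snd p)"

definition laurent_mult :: "(complex \<times> int) list \<Rightarrow> (complex \<times> int) list \<Rightarrow> (complex \<times> int) list" where
  "laurent_mult xs ys = concat (map (\<lambda>p. map (\<lambda>q. (fst p * fst q, snd p + snd q)) ys) xs)"

lemma laurent_Nil [simp]: "laurent [] z = 0"
  by (simp add: laurent_def)

lemma laurent_Cons [simp]: "laurent (p # xs) z = fst p * z powi snd p + laurent xs z"
  by (simp add: laurent_def)

lemma laurent_append [simp]: "laurent (xs @ ys) z = laurent xs z + laurent ys z"
  by (simp add: laurent_def)

lemma laurent_laurent_mult:
  assumes "z \<noteq> 0"
  shows "laurent (laurent_mult xs ys) z = laurent xs z * laurent ys z"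
proof -
  have "laurent (map (\<lambda>q. (fst p * fst q, snd p + snd q)) ys) z = fst p * z powi snd p * laurent ys z"
    for p by (induction ys) (use assms in \<open>auto simp: power_int_add algebra_simps\<close>)
  then show ?thesis
    by (induction xs) (auto simp: laurent_mult_def algebra_simps)
qed

definition int_submonoid :: "int set \<Rightarrow> bool" where
  "int_submonoid E \<longleftrightarrow> 0 \<in> E \<and> (\<forall>a\<in>E. \<forall>b\<in>E. a + b \<in> E)"

lemma int_submonoid_UNIV: "int_submonoid UNIV"
  by (simp add: int_submonoid_def)

lemma int_submonoid_nonneg: "int_submonoid {0..}"
  by (auto simp: int_submonoid_def)

definition laurent_on :: "int set \<Rightarrow> (complex \<Rightarrow> complex) \<Rightarrow> bool" where
  "laurent_on E g \<longleftrightarrow>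
     (\<exists>xs. (\<forall>p\<in>set xs. snd p \<in> E) \<and> (\<forall>z. norm z = 1 \<longrightarrow> g z = laurent xs z))"

lemma laurent_on_cong:
  "laurent_on E f \<Longrightarrow> (\<And>z. norm z = 1 \<Longrightarrow> g z = f z) \<Longrightarrow> laurent_on E g"
  unfolding laurent_on_def by auto

lemma laurent_on_mono: "laurent_on E g \<Longrightarrow> E \<subseteq> E' \<Longrightarrow> laurent_on E' g"
  unfolding laurent_on_def by blast

lemma laurent_on_monomial: "k \<in> E \<Longrightarrow> laurent_on E (\<lambda>z. c * z powi k)"
  unfolding laurent_on_def by (rule exI[of _ "[(c, k)]"]) auto

lemma laurent_on_const: "int_submonoid E \<Longrightarrow> laurent_on E (\<lambda>z. c)"
  using laurent_on_monomial[of 0 E c] by (simp add: int_submonoid_def)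

lemma laurent_on_add: "laurent_on E f \<Longrightarrow> laurent_on E g \<Longrightarrow> laurent_on E (\<lambda>z. f z + g z)"
  unfolding laurent_on_def by (metis (no_types, lifting) Un_iff laurent_append set_append)

lemma laurent_on_mult:
  assumes "int_submonoid E" "laurent_on E f" "laurent_on E g"
  shows "laurent_on E (\<lambda>z. f z * g z)"
proof -
  obtain xs where xs: "\<forall>p\<in>set xs. snd p \<in> E" "\<forall>z. norm z = 1 \<longrightarrow> f z = laurent xs z"
    using assms(2) by (auto simp: laurent_on_def)
  obtain ys where ys: "\<forall>p\<in>set ys. snd p \<in> E" "\<forall>z. norm z = 1 \<longrightarrow> g z = laurent ys z"
    using assms(3) by (auto simp: laurent_on_def)
  have "\<forall>p\<in>set (laurent_mult xs ys). snd p \<in> E"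
    using xs(1) ys(1) assms(1) by (auto simp: laurent_mult_def int_submonoid_def)
  moreover have "f z * g z = laurent (laurent_mult xs ys) z" if "norm z = 1" for z
    using xs ys that by (subst laurent_laurent_mult) auto
  ultimately show ?thesis
    unfolding laurent_on_def by blast
qed

lemma laurent_on_sum:
  assumes "int_submonoid E" "finite S" "\<And>k. k \<in> S \<Longrightarrow> laurent_on E (f k)"
  shows "laurent_on E (\<lambda>z. \<Sum>k\<in>S. f k z)"
  using assms(2,3)
  by (induction S rule: finite_induct) (auto intro: laurent_on_add laurent_on_const assms(1))

lemma laurent_on_prod:
  assumes "int_submonoid E" "finite S" "\<And>k. k \<in> S \<Longrightarrow> laurent_on E (f k)"
  shows "laurent_on E (\<lambda>z. \<Prod>k\<in>S. f k z)"
  using assms(2,3)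
  by (induction S rule: finite_induct) (auto intro: laurent_on_mult laurent_on_const assms(1))

lemma laurent_on_det:
  fixes A :: "complex \<Rightarrow> 'n::finite cmat"
  assumes "int_submonoid E" "\<And>i j. laurent_on E (\<lambda>z. A z $ i $ j)"
  shows "laurent_on E (\<lambda>z. det (A z))"
  unfolding det_def
  by (intro laurent_on_sum laurent_on_mult laurent_on_prod laurent_on_const assms
      finite_permutations) auto

lemma laurent_on_matrix_mult:
  fixes A B :: "complex \<Rightarrow> 'n::finite cmat"
  assumes "int_submonoid E"
    and "\<And>i j. laurent_on E (\<lambda>z. A z $ i $ j)" "\<And>i j. laurent_on E (\<lambda>z. B z $ i $ j)"
  shows "laurent_on E (\<lambda>z. (A z ** B z) $ i $ j)"
  unfolding matrix_matrix_mult_def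
  by (simp, intro laurent_on_sum laurent_on_mult assms) auto

lemma laurent_on_leval:
  fixes A :: "int \<Rightarrow> 'n::finite cmat"
  assumes "int_submonoid E" "fin_supp A" "\<And>k. A k \<noteq> 0 \<Longrightarrow> k \<in> E"
  shows "laurent_on E (\<lambda>z. leval A z $ i $ j)"
  unfolding leval_def using assms
  by (simp, intro laurent_on_sum)
    (auto simp: fin_supp_def intro!: laurent_on_cong[OF laurent_on_monomial[of _ E "A _ $ i $ j"]])

definition laurent_coeff :: "(complex \<times> int) list \<Rightarrow> int \<Rightarrow> complex" where
  "laurent_coeff xs m = (\<Sum>p\<leftarrow>xs. if snd p = m then fst p else 0)"

lemma laurent_coeff_Cons [simp]:
  "laurent_coeff (p # xs) m = (if snd p = m then fst p else 0) + laurent_coeff xs m"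
  by (simp add: laurent_coeff_def)

lemma laurent_eq_sum_coeff:
  assumes "finite K" "snd ` set xs \<subseteq> K"
  shows "laurent xs z = (\<Sum>m\<in>K. laurent_coeff xs m * z powi m)"
  using assms(2)
proof (induction xs)
  case Nil
  then show ?case by (simp add: laurent_coeff_def)
next
  case (Cons p xs)
  have "(\<Sum>m\<in>K. laurent_coeff (p # xs) m * z powi m)
        = (\<Sum>m\<in>K. if snd p = m then fst p * z powi m else 0) + (\<Sum>m\<in>K. laurent_coeff xs m * z powi m)"
    by (subst sum.distrib[symmetric]) (rule sum.cong; auto simp: algebra_simps)
  also have "(\<Sum>m\<in>K. if snd p = m then fst p * z powi m else 0) = fst p * z powi snd p"
    using Cons.prems assms(1) by (simp add: sum.delta)
  finally show ?case
    using Cons by simp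
qed

lemma laurent_on_nonneg_if_coeff_neg_zero:
  assumes "\<And>m. m < 0 \<Longrightarrow> laurent_coeff xs m = 0"
  shows "laurent_on {0..} (laurent xs)"
proof -
  define K where "K = snd ` set xs"
  have K: "finite K" "snd ` set xs \<subseteq> K"
    by (simp_all add: K_def)
  have "laurent xs z = (\<Sum>m\<in>K \<inter> {0..}. laurent_coeff xs m * z powi m)" for z
    unfolding laurent_eq_sum_coeff[OF K]
    by (rule sum.mono_neutral_right) (use K assms in auto)
  moreover have "laurent_on {0..} (\<lambda>z. \<Sum>m\<in>K \<inter> {0..}. laurent_coeff xs m * z powi m)"
    by (intro laurent_on_sum int_submonoid_nonneg laurent_on_monomial) (use K in auto)
  ultimately show ?thesis
    by (simp add: laurent_on_cong)
qed

lemma laurent_on_nonneg_imp_poly: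
  assumes "laurent_on {0..} g"
  obtains p where "\<And>z. norm z = 1 \<Longrightarrow> g z = poly p z"
proof -
  obtain xs where xs: "\<forall>p\<in>set xs. snd p \<in> {0..}" "\<forall>z. norm z = 1 \<longrightarrow> g z = laurent xs z"
    using assms by (auto simp: laurent_on_def)
  have poly_eq: "laurent xs z = poly (\<Sum>q\<leftarrow>xs. monom (fst q) (nat (snd q))) z" for z
    using xs(1)
  proof (induction xs)
    case (Cons a xs)
    then have "z powi snd a = z ^ nat (snd a)"
      by (metis atLeast_iff list.set_intros(1) nat_0_le power_int_of_nat)
    then show ?case
      using Cons by (simp add: poly_monom)
  qed simp
  show ?thesis
    by (rule that) (simp add: xs(2) poly_eq)
qed

lemma infinite_unit_circle: "infinite {z::complex. norm z = 1}"
proof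
  assume fin: "finite {z::complex. norm z = 1}"
  have "inj_on cis {0..pi}"
    by (rule inj_onI) (metis atLeastAtMost_iff cis.sel(1) cos_inj_pi)
  moreover have "cis ` {0..pi} \<subseteq> {z. norm z = 1}"
    by auto
  ultimately have "finite {0..pi}"
    using fin finite_imageD finite_subset by metis
  then show False
    using infinite_Icc[of 0 pi] pi_gt_zero by auto
qed

text \<open>The identity \<open>p q = 1\<close> holds at infinitely many points, hence for the polynomials,
which forces both degrees to vanish.\<close>

lemma laurent_on_nonneg_unit_const:
  assumes "laurent_on {0..} f" "laurent_on {0..} g" "\<And>z. norm z = 1 \<Longrightarrow> f z * g z = 1"
  obtains c where "\<And>z. norm z = 1 \<Longrightarrow> f z = c"
proof -
  obtain p where p: "\<And>z. norm z = 1 \<Longrightarrow> f z = poly p z"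
    using laurent_on_nonneg_imp_poly[OF assms(1)] by blast
  obtain q where q: "\<And>z. norm z = 1 \<Longrightarrow> g z = poly q z"
    using laurent_on_nonneg_imp_poly[OF assms(2)] by blast
  have "{z::complex. norm z = 1} \<subseteq> {z. poly (p * q - 1) z = 0}"
    using p q assms(3) by auto
  then have "p * q - 1 = 0"
    using infinite_unit_circle poly_roots_finite finite_subset by blast
  then have pq: "p * q = 1"
    by simp
  then have "p \<noteq> 0" "q \<noteq> 0"
    by auto
  then have "degree p = 0"
    using degree_mult_eq[of p q] pq by simp
  then obtain c where "p = [:c:]"
    by (rule degree_eq_zeroE)
  then show ?thesis
    using that p by auto
qed

section \<open>Fourier coefficients of elements of \<open>H\<^sub>+\<close>\<close>

lemma set_integrable_cis_int: "set_integrable lborel {0..2*pi} (\<lambda>\<theta>. cis (of_int n * \<theta>))"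
  by (intro borel_integrable_atLeastAtMost' continuous_intros)

lemma set_integral_cis_int:
  "(LINT \<theta>:{0..2*pi}|lborel. cis (of_int n * \<theta>)) = (if n = 0 then 2 * pi else 0)"
proof -
  have eq: "(LINT \<theta>:{0..2*pi}|lborel. cis (of_int n * \<theta>))
            = integral {0..2*pi} (\<lambda>\<theta>. cis (of_int n * \<theta>))"
    using set_borel_integral_eq_integral(2)[OF set_integrable_cis_int] .
  show ?thesis
  proof (cases "n = 0")
    case True
    then show ?thesis
      using eq by (simp add: scaleR_conv_of_real)
  next
    case False
    have d: "((\<lambda>\<theta>. cis (of_int n * \<theta>)) has_vector_derivative (\<i> * of_int n * cis (of_int n * x)))
               (at x within {0..2*pi})" for x
      unfolding has_vector_derivative_def
      by (rule has_derivative_eq_rhs, (rule derivative_eq_intros)+)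
        (auto simp: scaleR_conv_of_real algebra_simps)
    from has_vector_derivative_mult_right[OF d, of "1 / (\<i> * of_int n)"]
    have d': "((\<lambda>\<theta>. cis (of_int n * \<theta>) / (\<i> * of_int n)) has_vector_derivative cis (of_int n * x))
                (at x within {0..2*pi})" for x
      using False by (simp add: field_simps)
    have "cis (of_int n * (2 * pi)) = 1"
      by (metis cis_2pi cis_power_int power_int_1_left)
    then show ?thesis
      using fundamental_theorem_of_calculus[OF _ d'] eq False integral_unique by auto
  qed
qed

lemma set_integrable_dominated:
  fixes g :: "real \<Rightarrow> 'b::{banach,second_countable_topology}" and F :: "real \<Rightarrow> real"
  assumes "set_integrable lborel {0..2*pi} F" "g \<in> borel_measurable lborel"
    and "\<And>\<theta>. norm (g \<theta>) \<le> F \<theta>"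
  shows "set_integrable lborel {0..2*pi} g"
  by (rule set_integrable_bound[OF assms(1)])
    (use assms(2,3) in \<open>auto simp: set_borel_measurable_def intro: order_trans[OF _ abs_ge_self]\<close>)

lemma abs_le_1_plus_square: "\<bar>x::real\<bar> \<le> 1 + x\<^sup>2"
proof (cases "\<bar>x\<bar> \<le> 1")
  case True
  then show ?thesis by (simp add: add_increasing2)
next
  case False
  then have "\<bar>x\<bar> * 1 \<le> \<bar>x\<bar> * \<bar>x\<bar>"
    by (intro mult_left_mono) auto
  then show ?thesis
    by (simp add: power2_eq_square)
qed

lemma L2circ_D:
  fixes f :: "complex \<Rightarrow> 'n::finite cvec"
  assumes "f \<in> L2circ"
  shows "(\<lambda>\<theta>. f (cis \<theta>)) \<in> borel_measurable lborel"
    and "(\<lambda>\<theta>. f (cis \<theta>) $ i) \<in> borel_measurable lborel"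
    and "set_integrable lborel {0..2*pi} (\<lambda>\<theta>. (norm (f (cis \<theta>)))\<^sup>2)"
    and "set_integrable lborel {0..2*pi} (\<lambda>\<theta>. norm (f (cis \<theta>)))"
proof -
  show meas: "(\<lambda>\<theta>. f (cis \<theta>)) \<in> borel_measurable lborel"
    and sq: "set_integrable lborel {0..2*pi} (\<lambda>\<theta>. (norm (f (cis \<theta>)))\<^sup>2)"
    using assms by (auto simp: L2circ_def)
  show "(\<lambda>\<theta>. f (cis \<theta>) $ i) \<in> borel_measurable lborel"
    by (rule borel_measurable_continuous_on[OF _ meas]) (intro continuous_intros)
  show "set_integrable lborel {0..2*pi} (\<lambda>\<theta>. norm (f (cis \<theta>)))"
  proof (rule set_integrable_dominated)
    show "set_integrable lborel {0..2*pi} (\<lambda>\<theta>. 1 + (norm (f (cis \<theta>)))\<^sup>2)"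
      by (intro set_integral_add sq borel_integrable_atLeastAtMost' continuous_intros)
    show "norm (norm (f (cis \<theta>))) \<le> 1 + (norm (f (cis \<theta>)))\<^sup>2" for \<theta>
      using abs_le_1_plus_square[of "norm (f (cis \<theta>))"] by simp
  qed (use meas in simp)
qed

lemma continuous_on_vector_smult_left [continuous_intros]:
  fixes g :: "'a::topological_space \<Rightarrow> complex" and v :: "complex^'n"
  assumes "continuous_on S g"
  shows "continuous_on S (\<lambda>x. g x *s v)"
proof -
  have "(\<lambda>x. g x *s v) = (\<lambda>x. \<chi> j. g x * v $ j)"
    by (auto simp: vec_eq_iff)
  then show ?thesis
    by (simp only:) (intro continuous_on_vec_lambda continuous_on_mult assms continuous_on_const)
qed

lemma continuous_on_vector_smult_right [continuous_intros]:
  fixes g :: "'a::topological_space \<Rightarrow> complex^'n"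
  assumes "continuous_on S g"
  shows "continuous_on S (\<lambda>x. a *s g x)"
proof -
  have "(\<lambda>x. a *s g x) = (\<lambda>x. \<chi> j. a * g x $ j)"
    by (auto simp: vec_eq_iff)
  then show ?thesis
    by (simp only:) (intro continuous_on_vec_lambda continuous_on_mult assms continuous_on_const
        continuous_on_component)
qed

lemma continuous_imp_L2circ:
  fixes g :: "complex \<Rightarrow> 'n::finite cvec"
  assumes "continuous_on UNIV (\<lambda>\<theta>. g (cis \<theta>))"
  shows "g \<in> L2circ"
proof -
  have "(\<lambda>\<theta>. g (cis \<theta>)) \<in> borel_measurable borel"
    by (rule borel_measurable_continuous_onI[OF assms])
  moreover have "set_integrable lborel {0..2*pi} (\<lambda>\<theta>. (norm (g (cis \<theta>)))\<^sup>2)"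
    by (intro borel_integrable_atLeastAtMost' continuous_intros continuous_on_subset[OF assms]) auto
  ultimately show ?thesis
    by (simp add: L2circ_def)
qed

lemma vec_poly_in_L2circ: "(\<lambda>z. \<Sum>j<N. (z ^ j) *s c j) \<in> L2circ"
  by (rule continuous_imp_L2circ) (intro continuous_intros)

lemma L2circ_diff:
  fixes f g :: "complex \<Rightarrow> 'n::finite cvec"
  assumes "f \<in> L2circ" "g \<in> L2circ"
  shows "(\<lambda>z. f z - g z) \<in> L2circ"
proof -
  note f = L2circ_D[OF assms(1)] and g = L2circ_D[OF assms(2)]
  have meas: "(\<lambda>\<theta>. f (cis \<theta>) - g (cis \<theta>)) \<in> borel_measurable lborel"
    using f(1) g(1) by simp
  have "set_integrable lborel {0..2*pi} (\<lambda>\<theta>. (norm (f (cis \<theta>) - g (cis \<theta>)))\<^sup>2)"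
  proof (rule set_integrable_dominated)
    show "set_integrable lborel {0..2*pi} (\<lambda>\<theta>. 2 * (norm (f (cis \<theta>)))\<^sup>2 + 2 * (norm (g (cis \<theta>)))\<^sup>2)"
      by (intro set_integral_add set_integrable_mult_right f(3) g(3))
    show "(\<lambda>\<theta>. (norm (f (cis \<theta>) - g (cis \<theta>)))\<^sup>2) \<in> borel_measurable lborel"
      using meas by simp
    fix \<theta>
    have "(norm (f (cis \<theta>) - g (cis \<theta>)))\<^sup>2 \<le> (norm (f (cis \<theta>)) + norm (g (cis \<theta>)))\<^sup>2"
      by (intro power_mono norm_triangle_ineq4) auto
    also have "\<dots> \<le> 2 * (norm (f (cis \<theta>)))\<^sup>2 + 2 * (norm (g (cis \<theta>)))\<^sup>2"
      using sum_squares_bound[of "norm (f (cis \<theta>))" "norm (g (cis \<theta>))"]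
      by (simp add: power2_eq_square algebra_simps)
    finally show "norm ((norm (f (cis \<theta>) - g (cis \<theta>)))\<^sup>2)
                  \<le> 2 * (norm (f (cis \<theta>)))\<^sup>2 + 2 * (norm (g (cis \<theta>)))\<^sup>2"
      by simp
  qed
  with meas show ?thesis
    by (simp add: L2circ_def)
qed

text \<open>Instead of Cauchy-Schwarz, integrate the pointwise AM-GM inequality
\<open>x \<le> e/2 + x\<^sup>2/(2e)\<close>.\<close>

lemma set_integral_norm_le_l2dist:
  fixes f g :: "complex \<Rightarrow> 'n::finite cvec"
  assumes "f \<in> L2circ" "g \<in> L2circ" and e: "e > 0" and dist: "l2dist f g < e"
  shows "(LINT \<theta>:{0..2*pi}|lborel. norm (f (cis \<theta>) - g (cis \<theta>))) \<le> (pi + 1/2) * e"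
proof -
  let ?I = "{0..2*pi}"
  define h where "h \<theta> = f (cis \<theta>) - g (cis \<theta>)" for \<theta>
  note hL2 = L2circ_D[OF L2circ_diff[OF assms(1,2)], folded h_def]
  define D where "D = (LINT \<theta>:?I|lborel. (norm (h \<theta>))\<^sup>2)"
  have "sqrt D < e"
    using dist by (simp add: l2dist_def D_def h_def)
  then have "sqrt D < sqrt (e\<^sup>2)"
    using e by simp
  then have D: "D < e\<^sup>2"
    by (simp only: real_sqrt_less_iff)
  have "(LINT \<theta>:?I|lborel. norm (h \<theta>)) \<le> (LINT \<theta>:?I|lborel. e / 2 + (norm (h \<theta>))\<^sup>2 * (1 / (2 * e)))"
  proof (rule set_integral_mono)
    show "set_integrable lborel ?I (\<lambda>\<theta>. e / 2 + (norm (h \<theta>))\<^sup>2 * (1 / (2 * e)))"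
      by (intro set_integral_add set_integrable_mult_left hL2(3) borel_integrable_atLeastAtMost'
          continuous_intros)
    fix \<theta>
    have "0 \<le> (norm (h \<theta>) - e)\<^sup>2"
      by simp
    then show "norm (h \<theta>) \<le> e / 2 + (norm (h \<theta>))\<^sup>2 * (1 / (2 * e))"
      using e by (simp add: field_simps power2_eq_square)
  qed (rule hL2(4))
  also have "\<dots> = (LINT \<theta>:?I|lborel. e / 2) + (LINT \<theta>:?I|lborel. (norm (h \<theta>))\<^sup>2 * (1 / (2 * e)))"
    by (intro set_integral_add(2) set_integrable_mult_left hL2(3) borel_integrable_atLeastAtMost'
        continuous_intros)
  also have "\<dots> = pi * e + D * (1 / (2 * e))"
    by (simp add: set_integral_const D_def)
  also have "\<dots> \<le> pi * e + e\<^sup>2 * (1 / (2 * e))"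
    using D e by (intro add_left_mono mult_right_mono) auto
  also have "\<dots> = (pi + 1/2) * e"
    using e by (simp add: power2_eq_square field_simps)
  finally show ?thesis
    by (simp add: h_def)
qed

lemma L2circ_set_integrable_component_mult:
  fixes f :: "complex \<Rightarrow> 'n::finite cvec"
  assumes "f \<in> L2circ"
  shows "set_integrable lborel {0..2*pi} (\<lambda>\<theta>. f (cis \<theta>) $ i * cis \<theta> ^ m)"
proof (rule set_integrable_dominated[OF L2circ_D(4)[OF assms]])
  show "(\<lambda>\<theta>. f (cis \<theta>) $ i * cis \<theta> ^ m) \<in> borel_measurable lborel"
    using L2circ_D(2)[OF assms]
    by (intro borel_measurable_times) (auto intro!: borel_measurable_continuous_onI continuous_intros)
qed (simp add: norm_mult norm_power Finite_Cartesian_Product.norm_nth_le)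

lemma set_integral_vec_poly_mult_cis_pow:
  fixes c :: "nat \<Rightarrow> 'n::finite cvec"
  assumes "m > 0"
  shows "(LINT \<theta>:{0..2*pi}|lborel. (\<Sum>j<N. (cis \<theta> ^ j) *s c j) $ i * cis \<theta> ^ m) = 0"
proof -
  have eq: "(\<Sum>j<N. (cis \<theta> ^ j) *s c j) $ i * cis \<theta> ^ m
            = (\<Sum>j<N. c j $ i * cis (of_int (int j + int m) * \<theta>))" for \<theta>
    by (simp add: sum_component sum_distrib_right)
      (rule sum.cong[OF refl], simp add: Complex.DeMoivre cis_mult[symmetric] algebra_simps)
  have "(LINT \<theta>:{0..2*pi}|lborel. (\<Sum>j<N. c j $ i * cis (of_int (int j + int m) * \<theta>)))
        = (\<Sum>j<N. c j $ i * (LINT \<theta>:{0..2*pi}|lborel. cis (of_int (int j + int m) * \<theta>)))"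
  proof -
    have "set_integrable lborel {0..2*pi} (\<lambda>\<theta>. c j $ i * cis (of_int (int j + int m) * \<theta>))" for j
      by (intro set_integrable_mult_right set_integrable_cis_int)
    then show ?thesis
      unfolding set_lebesgue_integral_def
      by (subst scaleR_sum_right, subst Bochner_Integration.integral_sum)
        (auto simp: set_integrable_def scaleR_conv_of_real mult.left_commute)
  qed
  also have "\<dots> = 0"
  proof -
    have "(LINT \<theta>:{0..2*pi}|lborel. cis (of_int (int j + int m) * \<theta>)) = 0" for j
      using assms set_integral_cis_int[of "int j + int m"] by simp
    then show ?thesis
      by simp
  qed
  finally show ?thesis
    by (simp only: eq)
qed

text \<open>The integral is \<open>2\<pi>\<close> times the Fourier coefficient of index \<open>-m\<close>. It vanishes for the
approximating vector polynomials, and the error is bounded by the \<open>L\<^sup>2\<close> distance.\<close>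

lemma Hplus_set_integral_component_mult_cis_pow:
  fixes f :: "complex \<Rightarrow> 'n::finite cvec"
  assumes f: "f \<in> Hplus" and m: "m > 0"
  shows "(LINT \<theta>:{0..2*pi}|lborel. f (cis \<theta>) $ i * cis \<theta> ^ m) = 0"
proof -
  let ?I = "{0..2*pi}"
  let ?X = "LINT \<theta>:?I|lborel. f (cis \<theta>) $ i * cis \<theta> ^ m"
  have fL2: "f \<in> L2circ"
    using f by (simp add: Hplus_def)
  have "norm ?X \<le> 0 + e" if e: "e > 0" for e
  proof -
    have pi': "pi + 1/2 > 0"
      using pi_gt_zero by linarith
    with e have "e / (pi + 1/2) > 0"
      by simp
    then obtain N c where dist: "l2dist f (\<lambda>z. \<Sum>j<N. (z ^ j) *s c j) < e / (pi + 1/2)"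
      using f by (auto simp: Hplus_def)
    define P where "P z = (\<Sum>j<N. (z ^ j) *s c j)" for z
    define h where "h z = f z - P z" for z
    have PL2: "P \<in> L2circ" and hL2: "h \<in> L2circ"
      unfolding h_def P_def by (intro vec_poly_in_L2circ L2circ_diff fL2)+
    have "f (cis \<theta>) $ i * cis \<theta> ^ m = h (cis \<theta>) $ i * cis \<theta> ^ m + P (cis \<theta>) $ i * cis \<theta> ^ m"
      for \<theta> by (simp add: h_def algebra_simps)
    then have "?X = (LINT \<theta>:?I|lborel. h (cis \<theta>) $ i * cis \<theta> ^ m)
                    + (LINT \<theta>:?I|lborel. P (cis \<theta>) $ i * cis \<theta> ^ m)"
      using set_integral_add(2)[OF L2circ_set_integrable_component_mult[OF hL2]
          L2circ_set_integrable_component_mult[OF PL2]] by simp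
    also have "(LINT \<theta>:?I|lborel. P (cis \<theta>) $ i * cis \<theta> ^ m) = 0"
      unfolding P_def by (rule set_integral_vec_poly_mult_cis_pow[OF m])
    finally have "norm ?X = norm (LINT \<theta>:?I|lborel. h (cis \<theta>) $ i * cis \<theta> ^ m)"
      by simp
    also have "\<dots> \<le> (LINT \<theta>:?I|lborel. norm (h (cis \<theta>) $ i * cis \<theta> ^ m))"
      by (rule set_integral_norm_bound[OF L2circ_set_integrable_component_mult[OF hL2]])
    also have "\<dots> \<le> (LINT \<theta>:?I|lborel. norm (f (cis \<theta>) - P (cis \<theta>)))"
    proof (rule set_integral_mono)
      show "set_integrable lborel ?I (\<lambda>\<theta>. norm (h (cis \<theta>) $ i * cis \<theta> ^ m))"
        by (rule set_integrable_norm[OF L2circ_set_integrable_component_mult[OF hL2]])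
      show "set_integrable lborel ?I (\<lambda>\<theta>. norm (f (cis \<theta>) - P (cis \<theta>)))"
        using L2circ_D(4)[OF hL2] by (simp add: h_def)
      show "norm (h (cis \<theta>) $ i * cis \<theta> ^ m) \<le> norm (f (cis \<theta>) - P (cis \<theta>))" for \<theta>
        using Finite_Cartesian_Product.norm_nth_le[of "f (cis \<theta>) - P (cis \<theta>)" i]
        by (simp add: h_def norm_mult norm_power)
    qed
    also have "\<dots> \<le> (pi + 1/2) * (e / (pi + 1/2))"
      using \<open>e / (pi + 1/2) > 0\<close> dist unfolding P_def
      by (intro set_integral_norm_le_l2dist fL2 vec_poly_in_L2circ)
    also have "\<dots> = 0 + e"
      using pi' by simp
    finally show ?thesis .
  qed
  then show ?thesis
    using field_le_epsilon[of "norm ?X" 0] by simp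
qed

lemma continuous_on_laurent_cis: "continuous_on UNIV (\<lambda>\<theta>. laurent xs (cis \<theta>))"
  by (induction xs) (auto simp: cis_power_int intro!: continuous_intros)

lemma set_integral_laurent_mult_cis_pow:
  "(LINT \<theta>:{0..2*pi}|lborel. laurent xs (cis \<theta>) * cis \<theta> ^ k) = 2 * pi * laurent_coeff xs (- int k)"
proof -
  define K where "K = insert (- int k) (snd ` set xs)"
  have K: "finite K" "snd ` set xs \<subseteq> K"
    by (auto simp: K_def)
  have eq: "laurent xs (cis \<theta>) * cis \<theta> ^ k = (\<Sum>m\<in>K. laurent_coeff xs m * cis (of_int (m + int k) * \<theta>))"
    for \<theta>
    unfolding laurent_eq_sum_coeff[OF K] sum_distrib_right
    by (rule sum.cong[OF refl])
      (simp add: cis_power_int Complex.DeMoivre mult.assoc cis_mult algebra_simps)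
  have "(LINT \<theta>:{0..2*pi}|lborel. laurent xs (cis \<theta>) * cis \<theta> ^ k)
        = (\<Sum>m\<in>K. laurent_coeff xs m * (LINT \<theta>:{0..2*pi}|lborel. cis (of_int (m + int k) * \<theta>)))"
  proof -
    have "set_integrable lborel {0..2*pi} (\<lambda>\<theta>. laurent_coeff xs m * cis (of_int (m + int k) * \<theta>))"
      for m by (intro set_integrable_mult_right set_integrable_cis_int)
    then show ?thesis
      unfolding eq set_lebesgue_integral_def
      by (subst scaleR_sum_right, subst Bochner_Integration.integral_sum)
        (auto simp: set_integrable_def scaleR_conv_of_real mult.left_commute)
  qed
  also have "\<dots> = (\<Sum>m\<in>K. if m = - int k then 2 * pi * laurent_coeff xs m else 0)"
    by (rule sum.cong[OF refl]) (simp only: set_integral_cis_int, auto)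
  also have "\<dots> = 2 * pi * laurent_coeff xs (- int k)"
    using K(1) by (simp add: K_def)
  finally show ?thesis .
qed

lemma Hplus_component_laurent_nonneg:
  fixes f :: "complex \<Rightarrow> 'n::finite cvec"
  assumes f: "f \<in> Hplus" and g: "laurent_on UNIV g"
    and ae: "AE \<theta> in lborel. \<theta> \<in> {0..2*pi} \<longrightarrow> f (cis \<theta>) $ i = g (cis \<theta>)"
  shows "laurent_on {0..} g"
proof -
  obtain xs where xs: "\<And>z. norm z = 1 \<Longrightarrow> g z = laurent xs z"
    using g by (auto simp: laurent_on_def)
  have "laurent_on {0..} (laurent xs)"
  proof (rule laurent_on_nonneg_if_coeff_neg_zero)
    fix m :: int
    assume "m < 0"
    then obtain k :: nat where k: "k > 0" "m = - int k"
      by (metis add.inverse_inverse neg_0_less_iff_less of_nat_0_less_iff pos_int_cases)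
    have fL2: "f \<in> L2circ"
      using f by (simp add: Hplus_def)
    have "0 = (LINT \<theta>:{0..2*pi}|lborel. f (cis \<theta>) $ i * cis \<theta> ^ k)"
      using Hplus_set_integral_component_mult_cis_pow[OF f k(1)] by simp
    also have "\<dots> = (LINT \<theta>:{0..2*pi}|lborel. laurent xs (cis \<theta>) * cis \<theta> ^ k)"
    proof (rule set_lebesgue_integral_cong_AE)
      show "(\<lambda>\<theta>. f (cis \<theta>) $ i * cis \<theta> ^ k) \<in> borel_measurable lborel"
        using L2circ_D(2)[OF fL2]
        by (intro borel_measurable_times) (auto intro!: borel_measurable_continuous_onI continuous_intros)
      show "(\<lambda>\<theta>. laurent xs (cis \<theta>) * cis \<theta> ^ k) \<in> borel_measurable lborel"
      proof -
        have "continuous_on UNIV (\<lambda>\<theta>. laurent xs (cis \<theta>) * cis \<theta> ^ k)"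
          by (intro continuous_intros continuous_on_laurent_cis)
        then show ?thesis
          using borel_measurable_continuous_onI by simp
      qed
      show "AE \<theta>\<in>{0..2*pi} in lborel. f (cis \<theta>) $ i * cis \<theta> ^ k = laurent xs (cis \<theta>) * cis \<theta> ^ k"
        using ae by eventually_elim (simp add: xs)
    qed auto
    also have "\<dots> = 2 * pi * laurent_coeff xs m"
      by (simp add: set_integral_laurent_mult_cis_pow k(2))
    finally show "laurent_coeff xs m = 0"
      by simp
  qed
  then show ?thesis
    by (rule laurent_on_cong) (simp add: xs)
qed

lemma const_in_Hplus: "(\<lambda>z. v) \<in> Hplus"
proof -
  have "l2dist (\<lambda>z. v) (\<lambda>z. \<Sum>i<1. (z ^ i) *s (\<lambda>_. v) i) = 0"
    by (simp add: l2dist_def)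
  moreover have "(\<lambda>z::complex. v) \<in> L2circ"
    by (rule continuous_imp_L2circ) (intro continuous_intros)
  ultimately show ?thesis
    unfolding Hplus_def by (auto intro!: exI[of _ 1] exI[of _ "\<lambda>_. v"])
qed

lemma norm_vector_smult: "norm (a *s (v::complex^'n)) = norm a * norm v"
proof -
  have "norm (a *s v) = sqrt ((norm a)\<^sup>2 * (\<Sum>i\<in>UNIV. (norm (v $ i))\<^sup>2))"
    by (simp add: norm_vec_def L2_set_def norm_mult power_mult_distrib sum_distrib_left)
  also have "\<dots> = norm a * norm v"
    by (simp add: real_sqrt_mult norm_vec_def L2_set_def)
  finally show ?thesis .
qed

lemma Hplus_smult:
  fixes f :: "complex \<Rightarrow> 'n::finite cvec"
  assumes f: "f \<in> Hplus" and a: "a \<noteq> 0"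
  shows "(\<lambda>z. a *s f z) \<in> Hplus"
proof -
  note fL2 = L2circ_D[OF conjunct1[OF f[unfolded Hplus_def mem_Collect_eq]]]
  have "(\<lambda>\<theta>. a *s f (cis \<theta>)) \<in> borel_measurable lborel"
    by (rule borel_measurable_continuous_on[OF _ fL2(1)]) (intro continuous_intros)
  moreover have "set_integrable lborel {0..2*pi} (\<lambda>\<theta>. (norm a)\<^sup>2 * (norm (f (cis \<theta>)))\<^sup>2)"
    using fL2(3) by (intro set_integrable_mult_right)
  ultimately have "(\<lambda>z. a *s f z) \<in> L2circ"
    by (simp add: L2circ_def norm_vector_smult power_mult_distrib)
  moreover have "\<exists>N c. l2dist (\<lambda>z. a *s f z) (\<lambda>z. \<Sum>i<N. (z ^ i) *s c i) < e" if e: "e > 0" for e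
  proof -
    have "e / norm a > 0"
      using e a by simp
    then obtain N c where dist: "l2dist f (\<lambda>z. \<Sum>i<N. (z ^ i) *s c i) < e / norm a"
      using f by (auto simp: Hplus_def)
    have eq: "a *s f z - (\<Sum>i<N. (z ^ i) *s (a *s c i)) = a *s (f z - (\<Sum>i<N. (z ^ i) *s c i))"
      for z by (simp add: vec_eq_iff sum_component sum_distrib_left algebra_simps)
    have "l2dist (\<lambda>z. a *s f z) (\<lambda>z. \<Sum>i<N. (z ^ i) *s (a *s c i))
               = norm a * l2dist f (\<lambda>z. \<Sum>i<N. (z ^ i) *s c i)"
      unfolding l2dist_def eq norm_vector_smult power_mult_distrib set_integral_mult_right
      by (simp add: real_sqrt_mult)
    also have "\<dots> < e"
      using dist a by (simp add: field_simps mult.commute)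
    finally show ?thesis
      by (intro exI[of _ N] exI[of _ "\<lambda>i. a *s c i"])
  qed
  ultimately show ?thesis
    by (simp add: Hplus_def)
qed

lemma msub_cong:
  assumes "\<And>z. norm z = 1 \<Longrightarrow> M z = M' z"
  shows "msub M S = msub M' S"
  using assms by (simp add: msub_def)

lemma cscale_mult_vector: "cscale a X *v v = X *v (a *s v)"
  by (simp add: vec_eq_iff cscale_def matrix_vector_mult_def sum_distrib_left algebra_simps)

lemma msub_cscale_subset:
  fixes M :: "complex \<Rightarrow> 'n::finite cmat"
  assumes a: "a \<noteq> 0"
  shows "msub (\<lambda>z. cscale a (M z)) Hplus \<subseteq> msub M Hplus"
proof
  fix g
  assume "g \<in> msub (\<lambda>z. cscale a (M z)) Hplus"
  then obtain f where g: "g \<in> L2circ" "f \<in> Hplus"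
    and ae: "AE \<theta> in lborel. \<theta> \<in> {0..2*pi} \<longrightarrow> g (cis \<theta>) = cscale a (M (cis \<theta>)) *v f (cis \<theta>)"
    by (auto simp: msub_def)
  from ae have "AE \<theta> in lborel. \<theta> \<in> {0..2*pi} \<longrightarrow> g (cis \<theta>) = M (cis \<theta>) *v (a *s f (cis \<theta>))"
    by eventually_elim (simp add: cscale_mult_vector)
  with g Hplus_smult[OF g(2) a] show "g \<in> msub M Hplus"
    unfolding msub_def by (auto intro!: bexI[of _ "\<lambda>z. a *s f z"])
qed

lemma msub_cscale:
  fixes M :: "complex \<Rightarrow> 'n::finite cmat"
  assumes a: "a \<noteq> 0"
  shows "msub (\<lambda>z. cscale a (M z)) Hplus = msub M Hplus"
proof
  show "msub (\<lambda>z. cscale a (M z)) Hplus \<subseteq> msub M Hplus"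
    by (rule msub_cscale_subset[OF a])
  have inv: "M z = cscale (1 / a) (cscale a (M z))" for z
    using a by (simp add: cscale_def vec_eq_iff)
  have "msub M Hplus = msub (\<lambda>z. cscale (1 / a) (cscale a (M z))) Hplus"
    by (rule msub_cong) (rule inv)
  also have "\<dots> \<subseteq> msub (\<lambda>z. cscale a (M z)) Hplus"
    using a by (intro msub_cscale_subset) simp
  finally show "msub M Hplus \<subseteq> msub (\<lambda>z. cscale a (M z)) Hplus" .
qed

section \<open>Loops in \<open>U\<^sub>\<xi>(U(n))\<close> have determinant one\<close>

lemma continuous_on_leval_cis: "continuous_on UNIV (\<lambda>\<theta>. leval A (cis \<theta>))"
  unfolding leval_def cis_power_int
  by (intro continuous_on_vec_lambda continuous_on_sum continuous_on_mult continuous_intros)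

lemma continuous_on_matrix_matrix_mult [continuous_intros]:
  fixes X Y :: "'a::topological_space \<Rightarrow> 'n::finite cmat"
  assumes "continuous_on S X" "continuous_on S Y"
  shows "continuous_on S (\<lambda>t. X t ** Y t)"
  unfolding matrix_matrix_mult_def
  by (intro continuous_on_vec_lambda continuous_on_sum continuous_on_mult continuous_on_component assms)

lemma continuous_on_matrix_vector_mult [continuous_intros]:
  fixes X :: "'a::topological_space \<Rightarrow> 'n::finite cmat"
  assumes "continuous_on S X"
  shows "continuous_on S (\<lambda>t. X t *v v)"
  unfolding matrix_vector_mult_def
  by (intro continuous_on_vec_lambda continuous_on_sum continuous_on_mult continuous_on_component
      assms continuous_on_const)

lemma Omega_alg_laurent_inverse:
  assumes "\<gamma> \<in> Omega_alg G"
  obtains \<delta> where "\<And>i j. laurent_on UNIV (\<lambda>z. leval \<gamma> z $ i $ j)"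
    and "\<And>i j. laurent_on UNIV (\<lambda>z. leval \<delta> z $ i $ j)"
    and "\<And>z. norm z = 1 \<Longrightarrow> leval \<gamma> z ** leval \<delta> z = mat 1"
    and "\<And>z. norm z = 1 \<Longrightarrow> leval \<delta> z ** leval \<gamma> z = mat 1"
proof -
  obtain \<delta> where "fin_supp \<gamma>" "fin_supp \<delta>"
    and "\<And>z. norm z = 1 \<Longrightarrow> leval \<gamma> z ** leval \<delta> z = mat 1 \<and> leval \<delta> z ** leval \<gamma> z = mat 1"
    using assms by (auto simp: Omega_alg_def)
  then show ?thesis
    using that laurent_on_leval[OF int_submonoid_UNIV] by blast
qed

lemma Lplus_alg_laurent_inverse:
  assumes "\<Psi> \<in> Lplus_alg Gc"
  obtains \<delta> where "\<And>i j. laurent_on {0..} (\<lambda>z. leval \<Psi> z $ i $ j)"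
    and "\<And>i j. laurent_on {0..} (\<lambda>z. leval \<delta> z $ i $ j)"
    and "\<And>z. norm z = 1 \<Longrightarrow> leval \<Psi> z ** leval \<delta> z = mat 1"
    and "\<And>z. norm z = 1 \<Longrightarrow> leval \<delta> z ** leval \<Psi> z = mat 1"
proof -
  obtain \<delta> where \<Psi>: "fin_supp \<Psi>" "\<forall>k<0. \<Psi> k = 0" and \<delta>: "fin_supp \<delta>" "\<forall>k<0. \<delta> k = 0"
    and "\<And>z. norm z = 1 \<Longrightarrow> leval \<Psi> z ** leval \<delta> z = mat 1 \<and> leval \<delta> z ** leval \<Psi> z = mat 1"
    using assms by (auto simp: Lplus_alg_def)
  moreover have "laurent_on {0..} (\<lambda>z. leval \<Psi> z $ i $ j)" "laurent_on {0..} (\<lambda>z. leval \<delta> z $ i $ j)"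
    for i j using \<Psi> \<delta> by (auto intro!: laurent_on_leval int_submonoid_nonneg simp: not_less[symmetric])
  ultimately show ?thesis
    using that by blast
qed

lemma matrix_vector_mult_axis_nth: "(A *v axis j 1) $ i = A $ i $ j"
  by (simp add: matrix_vector_mult_def axis_def if_distrib cong: if_cong)

text \<open>If \<open>A H\<^sub>+ \<subseteq> B H\<^sub>+\<close> then \<open>B\<^sup>-\<^sup>1A\<close> maps the constant vectors into \<open>H\<^sub>+\<close>, so each of its
columns has only non-negative Fourier modes.\<close>

lemma msub_subset_imp_laurent_nonneg:
  fixes A B B' :: "complex \<Rightarrow> 'n::finite cmat"
  assumes A: "continuous_on UNIV (\<lambda>\<theta>. A (cis \<theta>))"
    and sub: "msub A Hplus \<subseteq> msub B Hplus"
    and inv: "\<And>z. norm z = 1 \<Longrightarrow> B' z ** B z = mat 1"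
    and laurent: "laurent_on UNIV (\<lambda>z. (B' z ** A z) $ i $ j)"
  shows "laurent_on {0..} (\<lambda>z. (B' z ** A z) $ i $ j)"
proof -
  define h where "h z = A z *v axis j 1" for z
  have "h \<in> L2circ"
    unfolding h_def by (rule continuous_imp_L2circ) (intro continuous_intros A)
  then have "h \<in> msub A Hplus"
    using const_in_Hplus[of "axis j 1"] unfolding msub_def
    by (auto simp: h_def intro!: bexI[of _ "\<lambda>z. axis j 1"])
  with sub obtain f where f: "f \<in> Hplus"
    and ae: "AE \<theta> in lborel. \<theta> \<in> {0..2*pi} \<longrightarrow> h (cis \<theta>) = B (cis \<theta>) *v f (cis \<theta>)"
    by (auto simp: msub_def)
  from ae have "AE \<theta> in lborel. \<theta> \<in> {0..2*pi} \<longrightarrow> f (cis \<theta>) $ i = (B' (cis \<theta>) ** A (cis \<theta>)) $ i $ j"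
  proof eventually_elim
    case (elim \<theta>)
    have "(B' (cis \<theta>) ** A (cis \<theta>)) $ i $ j = (B' (cis \<theta>) *v h (cis \<theta>)) $ i"
      by (simp add: h_def matrix_vector_mul_assoc matrix_vector_mult_axis_nth)
    then show ?case
      using elim inv[of "cis \<theta>"] by (simp add: matrix_vector_mul_assoc)
  qed
  then show ?thesis
    by (rule Hplus_component_laurent_nonneg[OF f laurent])
qed

lemma sum_if_eq_mult:
  fixes f :: "'n::finite \<Rightarrow> complex"
  shows "(\<Sum>k\<in>UNIV. (if i = k then c else 0) * f k) = c * f i"
proof -
  have "(\<lambda>k. (if i = k then c else 0) * f k) = (\<lambda>k. if k = i then c * f i else 0)"
    by auto
  then show ?thesis
    by (simp only:) (simp add: sum.delta)
qed

definition diag_powi :: "('n::finite \<Rightarrow> int) \<Rightarrow> complex \<Rightarrow> 'n cmat" where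
  "diag_powi m z = (\<chi> i j. if i = j then z powi m i else 0)"

lemma diag_powi_mult:
  "diag_powi m z ** diag_powi m' z = (\<chi> i j. if i = j then z powi m i * z powi m' i else 0)"
  by (simp add: vec_eq_iff matrix_matrix_mult_def diag_powi_def sum_if_eq_mult)

lemma diag_powi_uminus_mult: "z \<noteq> 0 \<Longrightarrow> diag_powi (\<lambda>i. - m i) z ** diag_powi m z = mat 1"
  by (auto simp: diag_powi_mult vec_eq_iff mat_def power_int_minus)

lemma det_diag_powi:
  assumes "z \<noteq> 0" "(\<Sum>i\<in>UNIV. m i) = 0"
  shows "det (diag_powi m z) = 1"
proof -
  have "(\<Prod>i\<in>S. z powi m i) = z powi (\<Sum>i\<in>S. m i)" if "finite S" for S
    using that by (induction S rule: finite_induct) (use assms(1) in \<open>auto simp: power_int_add\<close>)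
  then show ?thesis
    using assms(2) by (subst det_diagonal) (auto simp: diag_powi_def)
qed

lemma laurent_on_diag_powi: "laurent_on UNIV (\<lambda>z. diag_powi m z $ i $ j)"
  by (cases "i = j")
    (auto simp: diag_powi_def intro: laurent_on_cong[OF laurent_on_monomial[of _ UNIV 1]]
      laurent_on_const int_submonoid_UNIV)

lemma continuous_on_diag_powi_cis: "continuous_on UNIV (\<lambda>\<theta>. diag_powi m (cis \<theta>))"
  unfolding diag_powi_def cis_power_int
proof (intro continuous_on_vec_lambda)
  show "continuous_on UNIV (\<lambda>\<theta>. if i = j then cis (of_int (m i) * \<theta>) else 0)" for i j
    by (cases "i = j") (auto intro!: continuous_intros)
qed

text \<open>For \<open>\<xi> \<in> I(SU(n))\<close> the diagonal entries are \<open>\<i> m\<^sub>k\<close> with integers \<open>m\<^sub>k\<close> summing to zero,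
and then \<open>\<gamma>\<^sub>\<xi>(\<lambda>) = diag(\<lambda>\<^sup>m\<^sup>\<^sub>k)\<close> independently of the branch of \<open>Ln\<close>.\<close>

lemma I_SU_gamma_xi_diag_powi:
  fixes \<xi> :: "'n::finite cmat"
  assumes "\<xi> \<in> I_SU"
  obtains m where "(\<Sum>i\<in>UNIV. m i) = 0" "\<And>z. z \<noteq> 0 \<Longrightarrow> gamma_xi \<xi> z = diag_powi m z"
proof -
  have "\<exists>n::int. \<xi> $ i $ i = \<i> * of_int n" for i
  proof -
    have "diag_exp (cscale (2 * pi) \<xi>) $ i $ i = mat 1 $ i $ i"
      using assms by (simp add: I_SU_def)
    then have "exp (2 * pi * \<xi> $ i $ i) = 1"
      by (simp add: diag_exp_def cscale_def mat_def)
    then obtain n :: int where "Im (2 * pi * \<xi> $ i $ i) = of_int (2 * n) * pi"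
      by (auto simp: exp_eq_1)
    then have "Im (\<xi> $ i $ i) = of_int n"
      using pi_gt_zero by (simp add: algebra_simps)
    moreover have "Re (\<xi> $ i $ i) = 0"
      using assms by (auto simp: I_SU_def t_SU_def t_U_def)
    ultimately have "\<xi> $ i $ i = \<i> * of_int n"
      by (simp add: complex_eq_iff)
    then show ?thesis
      by blast
  qed
  then obtain m where m: "\<And>i. \<xi> $ i $ i = \<i> * of_int (m i)"
    by metis
  have "\<i> * of_int (\<Sum>i\<in>UNIV. m i) = (\<Sum>i\<in>UNIV. \<xi> $ i $ i)"
    by (simp add: m sum_distrib_left)
  also have "\<dots> = 0"
    using assms by (simp add: I_SU_def t_SU_def)
  finally have "(\<Sum>i\<in>UNIV. m i) = 0"
    by (metis complex_i_not_zero mult_eq_0_iff of_int_eq_0_iff)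
  moreover have "gamma_xi \<xi> z = diag_powi m z" if "z \<noteq> 0" for z
  proof -
    have "exp ((- \<i> * Ln z) * (\<i> * of_int (m i))) = z powi m i" for i
    proof -
      have "(- \<i> * Ln z) * (\<i> * of_int (m i)) = of_int (m i) * Ln z"
        by (simp add: algebra_simps)
      then show ?thesis
        using that by (simp add: exp_power_int[symmetric])
    qed
    then show ?thesis
      by (simp add: vec_eq_iff gamma_xi_def diag_exp_def cscale_def diag_powi_def m)
  qed
  ultimately show ?thesis
    using that by blast
qed

text \<open>Both \<open>\<gamma>\<^sup>-\<^sup>1\<Psi>\<gamma>\<^sub>\<xi>\<close> and \<open>\<gamma>\<^sub>\<xi>\<^sup>-\<^sup>1\<Psi>\<^sup>-\<^sup>1\<gamma>\<close> are polynomial loops, hence so are \<open>det \<gamma>\<close> and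
\<open>det \<gamma>\<^sup>-\<^sup>1\<close>; being mutually inverse they are constant, and \<open>\<gamma>(1) = e\<close>.\<close>

lemma det_leval_eq_1:
  fixes \<xi> :: "'n::finite cmat"
  assumes \<xi>: "\<xi> \<in> I_SU" and \<gamma>: "\<gamma> \<in> Omega_alg G" and \<Psi>: "\<Psi> \<in> Lplus_alg Gc"
    and eq: "msub (leval \<gamma>) Hplus = msub (\<lambda>z. leval \<Psi> z ** gamma_xi \<xi> z) Hplus"
  shows "norm z = 1 \<Longrightarrow> det (leval \<gamma> z) = 1"
proof -
  obtain m where m: "(\<Sum>i\<in>UNIV. m i) = 0" "\<And>z. z \<noteq> 0 \<Longrightarrow> gamma_xi \<xi> z = diag_powi m z"
    using I_SU_gamma_xi_diag_powi[OF \<xi>] by blast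
  define D D' where "D = diag_powi m" and "D' = diag_powi (\<lambda>i. - m i)"
  obtain \<gamma>' where \<gamma>': "\<And>i j. laurent_on UNIV (\<lambda>z. leval \<gamma> z $ i $ j)"
      "\<And>i j. laurent_on UNIV (\<lambda>z. leval \<gamma>' z $ i $ j)"
      "\<And>z. norm z = 1 \<Longrightarrow> leval \<gamma> z ** leval \<gamma>' z = mat 1"
      "\<And>z. norm z = 1 \<Longrightarrow> leval \<gamma>' z ** leval \<gamma> z = mat 1"
    using Omega_alg_laurent_inverse[OF \<gamma>] by blast
  obtain \<Psi>' where \<Psi>': "\<And>i j. laurent_on {0..} (\<lambda>z. leval \<Psi> z $ i $ j)"
      "\<And>i j. laurent_on {0..} (\<lambda>z. leval \<Psi>' z $ i $ j)"
      "\<And>z. norm z = 1 \<Longrightarrow> leval \<Psi> z ** leval \<Psi>' z = mat 1"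
      "\<And>z. norm z = 1 \<Longrightarrow> leval \<Psi>' z ** leval \<Psi> z = mat 1"
    using Lplus_alg_laurent_inverse[OF \<Psi>] by blast
  have laurent: "laurent_on UNIV (\<lambda>z. leval \<Psi> z $ i $ j)" "laurent_on UNIV (\<lambda>z. leval \<Psi>' z $ i $ j)"
    "laurent_on UNIV (\<lambda>z. D z $ i $ j)" "laurent_on UNIV (\<lambda>z. D' z $ i $ j)" for i j
    by (rule laurent_on_mono[OF \<Psi>'(1) subset_UNIV], rule laurent_on_mono[OF \<Psi>'(2) subset_UNIV])
      (simp_all add: D_def D'_def laurent_on_diag_powi)
  have eq': "msub (leval \<gamma>) Hplus = msub (\<lambda>z. leval \<Psi> z ** D z) Hplus"
    unfolding eq D_def by (rule msub_cong) (metis m(2) norm_zero zero_neq_one)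
  have cont: "continuous_on UNIV (\<lambda>\<theta>. leval \<Psi> (cis \<theta>) ** D (cis \<theta>))"
    unfolding D_def D'_def by (intro continuous_intros continuous_on_leval_cis continuous_on_diag_powi_cis)
  define M M' where "M z = leval \<gamma>' z ** (leval \<Psi> z ** D z)"
    and "M' z = (D' z ** leval \<Psi>' z) ** leval \<gamma> z" for z
  have "laurent_on {0..} (\<lambda>z. M z $ i $ j)" for i j
    unfolding M_def
  proof (rule msub_subset_imp_laurent_nonneg[OF cont])
    show "msub (\<lambda>z. leval \<Psi> z ** D z) Hplus \<subseteq> msub (leval \<gamma>) Hplus"
      using eq' by simp
    show "laurent_on UNIV (\<lambda>z. (leval \<gamma>' z ** (leval \<Psi> z ** D z)) $ i $ j)"
      by (intro laurent_on_matrix_mult int_submonoid_UNIV \<gamma>' laurent)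
  qed (rule \<gamma>'(4))
  then have det_M: "laurent_on {0..} (\<lambda>z. det (M z))"
    by (intro laurent_on_det int_submonoid_nonneg)
  have inv_D: "(D' z ** leval \<Psi>' z) ** (leval \<Psi> z ** D z) = mat 1" if "norm z = 1" for z
  proof -
    have "(D' z ** leval \<Psi>' z) ** (leval \<Psi> z ** D z) = D' z ** ((leval \<Psi>' z ** leval \<Psi> z) ** D z)"
      by (simp add: matrix_mul_assoc)
    also have "\<dots> = D' z ** D z"
      by (simp only: \<Psi>'(4)[OF that] matrix_mul_lid)
    also have "\<dots> = mat 1"
      using that diag_powi_uminus_mult[of z m] unfolding D_def D'_def by force
    finally show ?thesis .
  qed
  have "laurent_on {0..} (\<lambda>z. M' z $ i $ j)" for i j
    unfolding M'_def
  proof (rule msub_subset_imp_laurent_nonneg[OF continuous_on_leval_cis])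
    show "msub (leval \<gamma>) Hplus \<subseteq> msub (\<lambda>z. leval \<Psi> z ** D z) Hplus"
      using eq' by simp
    show "laurent_on UNIV (\<lambda>z. ((D' z ** leval \<Psi>' z) ** leval \<gamma> z) $ i $ j)"
      by (intro laurent_on_matrix_mult int_submonoid_UNIV \<gamma>' laurent)
  qed (rule inv_D)
  then have det_M': "laurent_on {0..} (\<lambda>z. det (M' z))"
    by (intro laurent_on_det int_submonoid_nonneg)
  have det_inv: "A ** B = mat 1 \<Longrightarrow> det A * det B = 1" for A B :: "'n cmat"
    by (simp flip: det_mul)
  have det_D: "det (D z) = 1" "det (D' z) = 1" if "norm z = 1" for z
  proof -
    have "z \<noteq> 0"
      using that by auto
    then show "det (D z) = 1" "det (D' z) = 1"
      using m(1) by (simp_all add: D_def D'_def det_diag_powi sum_negf)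
  qed
  have "laurent_on {0..} (\<lambda>z. det (leval \<Psi> z) * det (M' z))"
    by (intro laurent_on_mult laurent_on_det int_submonoid_nonneg \<Psi>'(1) det_M')
  then have det_\<gamma>: "laurent_on {0..} (\<lambda>z. det (leval \<gamma> z))"
  proof (rule laurent_on_cong)
    fix z :: complex
    assume z: "norm z = 1"
    have "det (M' z) = det (leval \<Psi>' z) * det (leval \<gamma> z)"
      using det_D[OF z] by (simp add: M'_def det_mul)
    then show "det (leval \<gamma> z) = det (leval \<Psi> z) * det (M' z)"
      using det_inv[OF \<Psi>'(3)[OF z]] by (metis mult.assoc mult_1)
  qed
  have "laurent_on {0..} (\<lambda>z. det (M z) * det (leval \<Psi>' z))"
    by (intro laurent_on_mult laurent_on_det int_submonoid_nonneg \<Psi>'(2) det_M)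
  then have det_\<gamma>': "laurent_on {0..} (\<lambda>z. det (leval \<gamma>' z))"
  proof (rule laurent_on_cong)
    fix z :: complex
    assume z: "norm z = 1"
    have "det (M z) = det (leval \<gamma>' z) * det (leval \<Psi> z)"
      using det_D[OF z] by (simp add: M_def det_mul)
    then show "det (leval \<gamma>' z) = det (M z) * det (leval \<Psi>' z)"
      using det_inv[OF \<Psi>'(3)[OF z]] by (metis mult.assoc mult_1_right)
  qed
  obtain c where c: "\<And>z. norm z = 1 \<Longrightarrow> det (leval \<gamma> z) = c"
    using laurent_on_nonneg_unit_const[OF det_\<gamma> det_\<gamma>'] det_inv[OF \<gamma>'(3)] by blast
  have "leval \<gamma> 1 = mat 1"
    using \<gamma> by (simp add: Omega_alg_def)
  then have "c = 1"
    using c[of 1] by simp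
  with c show "norm z = 1 \<Longrightarrow> det (leval \<gamma> z) = 1"
    by blast
qed

lemma Lplus_alg_det_const:
  assumes "\<Psi> \<in> Lplus_alg Gc"
  obtains c where "c \<noteq> 0" "\<And>z. norm z = 1 \<Longrightarrow> det (leval \<Psi> z) = c"
proof -
  obtain \<Psi>' where \<Psi>': "\<And>i j. laurent_on {0..} (\<lambda>z. leval \<Psi> z $ i $ j)"
      "\<And>i j. laurent_on {0..} (\<lambda>z. leval \<Psi>' z $ i $ j)"
      "\<And>z. norm z = 1 \<Longrightarrow> leval \<Psi> z ** leval \<Psi>' z = mat 1"
    using Lplus_alg_laurent_inverse[OF assms] by metis
  have inv: "det (leval \<Psi> z) * det (leval \<Psi>' z) = 1" if "norm z = 1" for z
    using \<Psi>'(3)[OF that] by (simp flip: det_mul)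
  have det_poly: "laurent_on {0..} (\<lambda>z. det (leval \<Psi> z))" "laurent_on {0..} (\<lambda>z. det (leval \<Psi>' z))"
    by (intro laurent_on_det int_submonoid_nonneg \<Psi>'(1,2))+
  obtain c where c: "\<And>z. norm z = 1 \<Longrightarrow> det (leval \<Psi> z) = c"
    using laurent_on_nonneg_unit_const[OF det_poly inv] by blast
  moreover have "c \<noteq> 0"
    using inv[of 1] c[of 1] by force
  ultimately show ?thesis
    by (rule that[rotated])
qed

lemma cscale_eq_0_iff: "a \<noteq> 0 \<Longrightarrow> cscale a A = 0 \<longleftrightarrow> A = 0"
  by (auto simp: cscale_def vec_eq_iff)

lemma leval_cscale: "a \<noteq> 0 \<Longrightarrow> leval (\<lambda>k. cscale a (A k)) z = cscale a (leval A z)"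
  by (simp add: leval_def cscale_eq_0_iff cscale_def vec_eq_iff sum_distrib_left algebra_simps)

lemma cscale_matrix_mult: "cscale a A ** B = cscale a (A ** B)" "A ** cscale a B = cscale a (A ** B)"
  by (simp_all add: cscale_def vec_eq_iff matrix_matrix_mult_def sum_distrib_left algebra_simps)

lemma cscale_1: "cscale 1 A = A"
  by (simp add: cscale_def vec_eq_iff)

lemma cscale_cscale: "cscale a (cscale b A) = cscale (a * b) A"
  by (simp add: cscale_def vec_eq_iff)

lemma det_cscale: "det (cscale a (A::'n::finite cmat)) = a ^ CARD('n) * det A"
proof -
  have "cscale a A = mat a ** A"
    by (simp add: cscale_def vec_eq_iff matrix_matrix_mult_def mat_def sum_if_eq_mult)
  moreover have "det (mat a :: 'n cmat) = a ^ CARD('n)"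
    by (subst det_diagonal) (auto simp: mat_def)
  ultimately show ?thesis
    by (simp add: det_mul)
qed

lemma Lplus_alg_cscale:
  assumes "\<Psi> \<in> Lplus_alg Gc" and a: "a \<noteq> 0"
    and Gc': "\<And>z. norm z = 1 \<Longrightarrow> Gc' (cscale a (leval \<Psi> z))"
  shows "(\<lambda>k. cscale a (\<Psi> k)) \<in> Lplus_alg Gc'"
proof -
  obtain \<delta> where \<Psi>: "fin_supp \<Psi>" "\<forall>k<0. \<Psi> k = 0" and \<delta>: "fin_supp \<delta>" "\<forall>k<0. \<delta> k = 0"
    and inv: "\<And>z. norm z = 1 \<Longrightarrow> leval \<Psi> z ** leval \<delta> z = mat 1 \<and> leval \<delta> z ** leval \<Psi> z = mat 1"
    using assms(1) by (auto simp: Lplus_alg_def)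
  have a': "1 / a \<noteq> 0"
    using a by simp
  show ?thesis
    unfolding Lplus_alg_def
  proof (intro CollectI conjI allI impI exI[of _ "\<lambda>k. cscale (1 / a) (\<delta> k)"])
    show "fin_supp (\<lambda>k. cscale a (\<Psi> k))" "fin_supp (\<lambda>k. cscale (1 / a) (\<delta> k))"
      using \<Psi>(1) \<delta>(1) a a' by (simp_all add: fin_supp_def cscale_eq_0_iff)
    show "cscale a (\<Psi> k) = 0" "cscale (1 / a) (\<delta> k) = 0" if "k < 0" for k
      using \<Psi>(2) \<delta>(2) a a' that by (simp_all add: cscale_eq_0_iff)
    fix z :: complex
    assume z: "norm z = 1"
    show "Gc' (leval (\<lambda>k. cscale a (\<Psi> k)) z)"
      using Gc'[OF z] by (simp add: leval_cscale[OF a])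
    show "leval (\<lambda>k. cscale a (\<Psi> k)) z ** leval (\<lambda>k. cscale (1 / a) (\<delta> k)) z = mat 1"
      "leval (\<lambda>k. cscale (1 / a) (\<delta> k)) z ** leval (\<lambda>k. cscale a (\<Psi> k)) z = mat 1"
      using inv[OF z] a
      by (simp_all add: leval_cscale[OF a] leval_cscale[OF a'] cscale_matrix_mult cscale_cscale cscale_1)
  qed
qed

lemma Lplus_alg_GL_rescale_SL:
  fixes \<Psi> :: "int \<Rightarrow> 'n::finite cmat"
  assumes "\<Psi> \<in> Lplus_alg GL_grp"
  obtains a where "a \<noteq> 0" "(\<lambda>k. cscale a (\<Psi> k)) \<in> Lplus_alg SL_grp"
proof -
  obtain c where c: "c \<noteq> 0" "\<And>z. norm z = 1 \<Longrightarrow> det (leval \<Psi> z) = c"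
    using Lplus_alg_det_const[OF assms] by blast
  define a where "a = exp (Ln (1 / c) / of_nat CARD('n))"
  have "a ^ CARD('n) = exp (of_nat CARD('n) * (Ln (1 / c) / of_nat CARD('n)))"
    unfolding a_def by (rule exp_of_nat_mult[symmetric])
  also have "\<dots> = 1 / c"
    using c(1) by simp
  finally have "a ^ CARD('n) * c = 1"
    using c(1) by simp
  then have "(\<lambda>k. cscale a (\<Psi> k)) \<in> Lplus_alg SL_grp"
    by (intro Lplus_alg_cscale[OF assms]) (auto simp: a_def SL_grp_def det_cscale c(2))
  then show ?thesis
    by (rule that[rotated]) (simp add: a_def)
qed

lemma U_xi_mono:
  assumes "\<And>A. G A \<Longrightarrow> G' A" "\<And>A. Gc A \<Longrightarrow> Gc' A"
  shows "U_xi G Gc \<xi> \<subseteq> U_xi G' Gc' \<xi>"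
proof -
  have "Omega_alg G \<subseteq> Omega_alg G'" "Lplus_alg Gc \<subseteq> Lplus_alg Gc'"
    using assms by (auto simp: Omega_alg_def Lplus_alg_def)
  then show ?thesis
    unfolding U_xi_def by blast
qed

lemma U_xi_U_GL_subset_SU_SL:
  fixes \<xi> :: "'n::finite cmat"
  assumes \<xi>: "\<xi> \<in> I_SU"
  shows "U_xi U_grp GL_grp \<xi> \<subseteq> U_xi SU_grp SL_grp \<xi>"
proof
  fix \<gamma>
  assume "\<gamma> \<in> U_xi U_grp GL_grp \<xi>"
  then obtain \<Psi> where \<gamma>: "\<gamma> \<in> Omega_alg U_grp" and \<Psi>: "\<Psi> \<in> Lplus_alg GL_grp"
    and eq: "msub (leval \<gamma>) Hplus = msub (\<lambda>z. leval \<Psi> z ** gamma_xi \<xi> z) Hplus"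
    by (auto simp: U_xi_def)
  have "\<gamma> \<in> Omega_alg SU_grp"
    using \<gamma> det_leval_eq_1[OF \<xi> \<gamma> \<Psi> eq] by (auto simp: Omega_alg_def SU_grp_def U_grp_def)
  moreover obtain a where a: "a \<noteq> 0" "(\<lambda>k. cscale a (\<Psi> k)) \<in> Lplus_alg SL_grp"
    using Lplus_alg_GL_rescale_SL[OF \<Psi>] by blast
  moreover have "msub (\<lambda>z. leval (\<lambda>k. cscale a (\<Psi> k)) z ** gamma_xi \<xi> z) Hplus = msub (leval \<gamma>) Hplus"
    by (simp add: leval_cscale[OF a(1)] cscale_matrix_mult msub_cscale[OF a(1)] eq)
  ultimately show "\<gamma> \<in> U_xi SU_grp SL_grp \<xi>"
    unfolding U_xi_def by auto
qed

theorem mainTheorem7: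
  fixes \<xi> :: "complex^'n::finite^'n"
  assumes "\<xi> \<in> I_SU"
  shows "U_xi_sub SU_grp SL_grp \<xi> = U_xi_sub U_grp GL_grp \<xi>"
proof -
  have "U_xi SU_grp SL_grp \<xi> = U_xi U_grp GL_grp \<xi>"
  proof
    show "U_xi SU_grp SL_grp \<xi> \<subseteq> U_xi U_grp GL_grp \<xi>"
      by (rule U_xi_mono) (auto simp: SU_grp_def U_grp_def SL_grp_def GL_grp_def)
    show "U_xi U_grp GL_grp \<xi> \<subseteq> U_xi SU_grp SL_grp \<xi>"
      by (rule U_xi_U_GL_subset_SU_SL[OF assms])
  qed
  then show ?thesis
    by (simp add: U_xi_sub_def)
qed

end
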